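(* Let $Q$ be an automorphic loop of nilpotency class $3$, and let $a,b,c,d\in Q$. (i) If $(a,c,d),(b,c,d)\in Z(Q)$ then $(ab,c,d)=(a,c,d)(b,c,d)$. (ii) If $(a,b,d),(a,c,d)\in Z(Q)$ then $(a,bc,d)=(a,b,d)(a,c,d)$. (iii) If $(a,b,c),(a,b,d)\in Z(Q)$ then $(a,b,cd)=(a,b,c)(a,b,d)$.
   Context: A loop is a set with a binary operation such that all left and right translations $L_a:b\mapsto ab$, $R_a:b\mapsto ba$ are bijections and there is a two-sided identity $1$. The inner mapping group is the stabilizer of $1$ in the group generated by all translations; $Q$ is automorphic if all inner mappings are automorphisms. The associator $(a,b,c)$ is defined by $(ab)c=(a(bc))(a,b,c)$. The center $Z(Q)$ is the set of elements fixed by all inner mappings; $Z_0=1$, $Z_{i+1}(Q)$ is the preimage of $Z(Q/Z_i(Q))$, and $Q$ has nilpotency class $n$ if $Z_{n-1}(Q)\neq Q=Z_n(Q)$. *)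

theory Defs
  imports Main
begin

definition loop :: "'a set \<Rightarrow> ('a \<Rightarrow> 'a \<Rightarrow> 'a) \<Rightarrow> 'a \<Rightarrow> bool" where
  "loop G m e \<longleftrightarrow> e \<in> G \<and> (\<forall>x\<in>G. \<forall>y\<in>G. m x y \<in> G)
     \<and> (\<forall>x\<in>G. m e x = x \<and> m x e = x)
     \<and> (\<forall>a\<in>G. bij_betw (m a) G G \<and> bij_betw (\<lambda>x. m x a) G G)"

definition ltrans :: "'a set \<Rightarrow> ('a \<Rightarrow> 'a \<Rightarrow> 'a) \<Rightarrow> 'a \<Rightarrow> 'a \<Rightarrow> 'a" where
  "ltrans G m a = (\<lambda>x. if x \<in> G then m a x else x)"

definition rtrans :: "'a set \<Rightarrow> ('a \<Rightarrow> 'a \<Rightarrow> 'a) \<Rightarrow> 'a \<Rightarrow> 'a \<Rightarrow> 'a" where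
  "rtrans G m a = (\<lambda>x. if x \<in> G then m x a else x)"

definition ltrans_inv :: "'a set \<Rightarrow> ('a \<Rightarrow> 'a \<Rightarrow> 'a) \<Rightarrow> 'a \<Rightarrow> 'a \<Rightarrow> 'a" where
  "ltrans_inv G m a = (\<lambda>x. if x \<in> G then inv_into G (m a) x else x)"

definition rtrans_inv :: "'a set \<Rightarrow> ('a \<Rightarrow> 'a \<Rightarrow> 'a) \<Rightarrow> 'a \<Rightarrow> 'a \<Rightarrow> 'a" where
  "rtrans_inv G m a = (\<lambda>x. if x \<in> G then inv_into G (\<lambda>y. m y a) x else x)"

inductive_set mlt :: "'a set \<Rightarrow> ('a \<Rightarrow> 'a \<Rightarrow> 'a) \<Rightarrow> ('a \<Rightarrow> 'a) set"
  for G m where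
  mlt_id: "id \<in> mlt G m"
| mlt_L: "f \<in> mlt G m \<Longrightarrow> a \<in> G \<Longrightarrow> ltrans G m a \<circ> f \<in> mlt G m"
| mlt_R: "f \<in> mlt G m \<Longrightarrow> a \<in> G \<Longrightarrow> rtrans G m a \<circ> f \<in> mlt G m"
| mlt_Li: "f \<in> mlt G m \<Longrightarrow> a \<in> G \<Longrightarrow> ltrans_inv G m a \<circ> f \<in> mlt G m"
| mlt_Ri: "f \<in> mlt G m \<Longrightarrow> a \<in> G \<Longrightarrow> rtrans_inv G m a \<circ> f \<in> mlt G m"

definition inn :: "'a set \<Rightarrow> ('a \<Rightarrow> 'a \<Rightarrow> 'a) \<Rightarrow> 'a \<Rightarrow> ('a \<Rightarrow> 'a) set" where
  "inn G m e = {f \<in> mlt G m. f e = e}"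

definition automorphic :: "'a set \<Rightarrow> ('a \<Rightarrow> 'a \<Rightarrow> 'a) \<Rightarrow> 'a \<Rightarrow> bool" where
  "automorphic G m e \<longleftrightarrow> (\<forall>f\<in>inn G m e. \<forall>x\<in>G. \<forall>y\<in>G. f (m x y) = m (f x) (f y))"

definition center :: "'a set \<Rightarrow> ('a \<Rightarrow> 'a \<Rightarrow> 'a) \<Rightarrow> 'a \<Rightarrow> 'a set" where
  "center G m e = {x \<in> G. \<forall>f\<in>inn G m e. f x = x}"

definition lcoset :: "('a \<Rightarrow> 'a \<Rightarrow> 'a) \<Rightarrow> 'a \<Rightarrow> 'a set \<Rightarrow> 'a set" where
  "lcoset m x N = (\<lambda>n. m x n) ` N"

definition qmult :: "('a \<Rightarrow> 'a \<Rightarrow> 'a) \<Rightarrow> 'a set \<Rightarrow> 'a set \<Rightarrow> 'a set \<Rightarrow> 'a set" where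
  "qmult m N A B = lcoset m (m (SOME a. a \<in> A) (SOME b. b \<in> B)) N"

fun upper_center :: "'a set \<Rightarrow> ('a \<Rightarrow> 'a \<Rightarrow> 'a) \<Rightarrow> 'a \<Rightarrow> nat \<Rightarrow> 'a set" where
  "upper_center G m e 0 = {e}"
| "upper_center G m e (Suc i) =
     (let N = upper_center G m e i in
      {x \<in> G. lcoset m x N \<in>
         center ((\<lambda>y. lcoset m y N) ` G) (qmult m N) (lcoset m e N)})"

definition nilpotency_class :: "'a set \<Rightarrow> ('a \<Rightarrow> 'a \<Rightarrow> 'a) \<Rightarrow> 'a \<Rightarrow> nat \<Rightarrow> bool" where
  "nilpotency_class G m e n \<longleftrightarrow>
     upper_center G m e n = G \<and> (n = 0 \<or> upper_center G m e (n - 1) \<noteq> G)"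

definition associator :: "'a set \<Rightarrow> ('a \<Rightarrow> 'a \<Rightarrow> 'a) \<Rightarrow> 'a \<Rightarrow> 'a \<Rightarrow> 'a \<Rightarrow> 'a" where
  "associator G m a b c = (THE t. t \<in> G \<and> m (m a b) c = m (m a (m b c)) t)"

end

theory Submission
  imports Defs
begin

text \<open>
  For central \<open>t\<close>, the equation \<open>(x,c,d) = t\<close> says exactly that the inner mapping
  \<open>R\<^sub>c\<^sub>d\<^sup>-\<^sup>1 R\<^sub>d R\<^sub>c\<close> sends \<open>x\<close> to \<open>x t\<close>;
  likewise \<open>(a,x,d) = t\<close> and \<open>(a,b,x) = t\<close> are detected by
  \<open>R\<^sub>d\<^sup>-\<^sup>1 L\<^sub>a\<^sup>-\<^sup>1 R\<^sub>d L\<^sub>a\<close> and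
  \<open>L\<^sub>b\<^sup>-\<^sup>1 L\<^sub>a\<^sup>-\<^sup>1 L\<^sub>a\<^sub>b\<close>.
  In an automorphic loop inner mappings are automorphisms fixing the centre, so
  \<open>f x = x t\<close> and \<open>f y = y s\<close> give \<open>f (x y) = (x t)(y s) = (x y)(t s)\<close>.
\<close>

locale loop_structure =
  fixes G :: "'a set" and m :: "'a \<Rightarrow> 'a \<Rightarrow> 'a" and e :: 'a
  assumes loop: "loop G m e"
begin

definition ldiv :: "'a \<Rightarrow> 'a \<Rightarrow> 'a" where "ldiv a x = inv_into G (m a) x"
definition rdiv :: "'a \<Rightarrow> 'a \<Rightarrow> 'a" where "rdiv x a = inv_into G (\<lambda>y. m y a) x"

lemma mult_closed [simp]: "x \<in> G \<Longrightarrow> y \<in> G \<Longrightarrow> m x y \<in> G"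
  and unit_closed [simp]: "e \<in> G"
  and left_unit [simp]: "x \<in> G \<Longrightarrow> m e x = x"
  and right_unit [simp]: "x \<in> G \<Longrightarrow> m x e = x"
  and bij_left_mult: "a \<in> G \<Longrightarrow> bij_betw (m a) G G"
  and bij_right_mult: "a \<in> G \<Longrightarrow> bij_betw (\<lambda>x. m x a) G G"
  using loop unfolding loop_def by blast+

lemma ldiv_closed [simp]: "a \<in> G \<Longrightarrow> x \<in> G \<Longrightarrow> ldiv a x \<in> G"
  and mult_ldiv [simp]: "a \<in> G \<Longrightarrow> x \<in> G \<Longrightarrow> m a (ldiv a x) = x"
  and ldiv_mult [simp]: "a \<in> G \<Longrightarrow> x \<in> G \<Longrightarrow> ldiv a (m a x) = x"
  unfolding ldiv_def using bij_left_mult[of a]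
  by (auto simp: bij_betw_def inv_into_into f_inv_into_f)

lemma rdiv_closed [simp]: "a \<in> G \<Longrightarrow> x \<in> G \<Longrightarrow> rdiv x a \<in> G"
  and rdiv_mult [simp]: "a \<in> G \<Longrightarrow> x \<in> G \<Longrightarrow> m (rdiv x a) a = x"
  and mult_rdiv [simp]: "a \<in> G \<Longrightarrow> x \<in> G \<Longrightarrow> rdiv (m x a) a = x"
  unfolding rdiv_def using bij_right_mult[of a]
  by (auto simp: bij_betw_def inv_into_into f_inv_into_f[of x "\<lambda>y. m y a"]
      inv_into_f_f[of "\<lambda>y. m y a"])

lemma ldiv_self [simp]: "a \<in> G \<Longrightarrow> ldiv a a = e"
  by (metis right_unit ldiv_mult unit_closed)

lemma rdiv_self [simp]: "a \<in> G \<Longrightarrow> rdiv a a = e"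
  by (metis left_unit mult_rdiv unit_closed)

lemma left_cancel: "a \<in> G \<Longrightarrow> x \<in> G \<Longrightarrow> y \<in> G \<Longrightarrow> m a x = m a y \<longleftrightarrow> x = y"
  by (metis ldiv_mult)

lemma rdiv_eq_iff: "a \<in> G \<Longrightarrow> x \<in> G \<Longrightarrow> y \<in> G \<Longrightarrow> rdiv x a = y \<longleftrightarrow> x = m y a"
  by (metis rdiv_mult mult_rdiv)

lemma ldiv_eq_iff: "a \<in> G \<Longrightarrow> x \<in> G \<Longrightarrow> y \<in> G \<Longrightarrow> ldiv a x = y \<longleftrightarrow> x = m a y"
  by (metis mult_ldiv ldiv_mult)

lemma ltrans_apply [simp]: "ltrans G m a x = (if x \<in> G then m a x else x)"
  and rtrans_apply [simp]: "rtrans G m a x = (if x \<in> G then m x a else x)"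
  and ltrans_inv_apply [simp]: "ltrans_inv G m a x = (if x \<in> G then ldiv a x else x)"
  and rtrans_inv_apply [simp]: "rtrans_inv G m a x = (if x \<in> G then rdiv x a else x)"
  by (simp_all add: ltrans_def rtrans_def ltrans_inv_def rtrans_inv_def ldiv_def rdiv_def)

lemma associator_eq_iff:
  assumes "x \<in> G" "y \<in> G" "z \<in> G" "t \<in> G"
  shows "associator G m x y z = t \<longleftrightarrow> m (m x y) z = m (m x (m y z)) t"
proof -
  let ?s = "ldiv (m x (m y z)) (m (m x y) z)"
  have "associator G m x y z = ?s"
    unfolding associator_def using assms
    by (intro the_equality) (auto simp: left_cancel)
  then show ?thesis
    using assms by (auto simp: ldiv_eq_iff)
qed

definition inner_R :: "'a \<Rightarrow> 'a \<Rightarrow> 'a \<Rightarrow> 'a" where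
  "inner_R c d = rtrans_inv G m (m c d) \<circ> (rtrans G m d \<circ> (rtrans G m c \<circ> id))"

definition inner_M :: "'a \<Rightarrow> 'a \<Rightarrow> 'a \<Rightarrow> 'a" where
  "inner_M a d = rtrans_inv G m d \<circ> (ltrans_inv G m a \<circ> (rtrans G m d \<circ> (ltrans G m a \<circ> id)))"

definition inner_L :: "'a \<Rightarrow> 'a \<Rightarrow> 'a \<Rightarrow> 'a" where
  "inner_L a b = ltrans_inv G m b \<circ> (ltrans_inv G m a \<circ> (ltrans G m (m a b) \<circ> id))"

lemma inner_R_apply: "c \<in> G \<Longrightarrow> d \<in> G \<Longrightarrow> x \<in> G \<Longrightarrow> inner_R c d x = rdiv (m (m x c) d) (m c d)"
  by (simp add: inner_R_def)

lemma inner_M_apply: "a \<in> G \<Longrightarrow> d \<in> G \<Longrightarrow> x \<in> G \<Longrightarrow> inner_M a d x = rdiv (ldiv a (m (m a x) d)) d"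
  by (simp add: inner_M_def)

lemma inner_L_apply: "a \<in> G \<Longrightarrow> b \<in> G \<Longrightarrow> x \<in> G \<Longrightarrow> inner_L a b x = ldiv b (ldiv a (m (m a b) x))"
  by (simp add: inner_L_def)

lemma inner_R_inn:
  assumes "c \<in> G" "d \<in> G"
  shows "inner_R c d \<in> inn G m e"
proof -
  have "inner_R c d \<in> mlt G m"
    unfolding inner_R_def using assms by (intro mlt.intros) auto
  moreover have "inner_R c d e = e"
    using assms by (simp add: inner_R_apply)
  ultimately show ?thesis by (simp add: inn_def)
qed

lemma inner_M_inn:
  assumes "a \<in> G" "d \<in> G"
  shows "inner_M a d \<in> inn G m e"
proof -
  have "inner_M a d \<in> mlt G m"
    unfolding inner_M_def using assms by (intro mlt.intros) auto
  moreover have "inner_M a d e = e"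
    using assms by (simp add: inner_M_apply)
  ultimately show ?thesis by (simp add: inn_def)
qed

lemma inner_L_inn:
  assumes "a \<in> G" "b \<in> G"
  shows "inner_L a b \<in> inn G m e"
proof -
  have "inner_L a b \<in> mlt G m"
    unfolding inner_L_def using assms by (intro mlt.intros) auto
  moreover have "inner_L a b e = e"
    using assms by (simp add: inner_L_apply)
  ultimately show ?thesis by (simp add: inn_def)
qed

lemma center_closed: "t \<in> center G m e \<Longrightarrow> t \<in> G"
  unfolding center_def by blast

lemma inn_fixes_center: "f \<in> inn G m e \<Longrightarrow> t \<in> center G m e \<Longrightarrow> f t = t"
  unfolding center_def by blast

lemma central_commute:
  assumes t: "t \<in> center G m e" and x: "x \<in> G"
  shows "m x t = m t x"
proof -
  let ?T = "rtrans_inv G m x \<circ> (ltrans G m x \<circ> id)"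
  have "?T \<in> mlt G m"
    using x by (intro mlt.intros)
  then have "?T \<in> inn G m e"
    using x by (simp add: inn_def)
  then have "rdiv (m x t) x = t"
    using inn_fixes_center[OF _ t] center_closed[OF t] x by fastforce
  then show ?thesis
    using center_closed[OF t] x by (simp add: rdiv_eq_iff)
qed

lemma central_assoc_left:
  assumes t: "t \<in> center G m e" and "x \<in> G" "y \<in> G"
  shows "m (m t x) y = m t (m x y)"
  using inn_fixes_center[OF inner_R_inn t, of x y] center_closed[OF t] assms
  by (simp add: inner_R_apply rdiv_eq_iff)

lemma central_assoc_right:
  assumes t: "t \<in> center G m e" and "x \<in> G" "y \<in> G"
  shows "m x (m y t) = m (m x y) t"
  using inn_fixes_center[OF inner_L_inn t, of x y] center_closed[OF t] assms
  by (simp add: inner_L_apply ldiv_eq_iff)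

lemma central_assoc_middle:
  assumes t: "t \<in> center G m e" and "x \<in> G" "y \<in> G"
  shows "m (m x t) y = m (m x y) t"
  using assms center_closed[OF t]
  by (simp add: central_commute central_assoc_left)

lemma central_mult_mult:
  assumes t: "t \<in> center G m e" and s: "s \<in> center G m e" and "x \<in> G" "y \<in> G"
  shows "m (m x t) (m y s) = m (m x y) (m t s)"
proof -
  have G: "t \<in> G" "s \<in> G"
    using t s by (simp_all add: center_closed)
  have "m (m x t) (m y s) = m (m (m x t) y) s"
    using assms G by (simp add: central_assoc_right)
  also have "\<dots> = m (m (m x y) t) s"
    using central_assoc_middle[OF t assms(3,4)] by simp
  also have "\<dots> = m (m x y) (m t s)"
    using assms G by (simp add: central_assoc_right)
  finally show ?thesis .
qed

lemma associator_central_iff_inner_R: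
  assumes t: "t \<in> center G m e" and "x \<in> G" "c \<in> G" "d \<in> G"
  shows "associator G m x c d = t \<longleftrightarrow> inner_R c d x = m x t"
  using assms center_closed[OF t]
  by (simp add: associator_eq_iff inner_R_apply rdiv_eq_iff central_assoc_middle[OF t, of x "m c d"])

lemma associator_central_iff_inner_M:
  assumes t: "t \<in> center G m e" and "a \<in> G" "x \<in> G" "d \<in> G"
  shows "associator G m a x d = t \<longleftrightarrow> inner_M a d x = m x t"
  using assms center_closed[OF t]
  by (simp add: associator_eq_iff inner_M_apply rdiv_eq_iff ldiv_eq_iff
      central_assoc_right[symmetric] central_assoc_middle)

lemma associator_central_iff_inner_L:
  assumes t: "t \<in> center G m e" and "a \<in> G" "b \<in> G" "x \<in> G"
  shows "associator G m a b x = t \<longleftrightarrow> inner_L a b x = m x t"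
  using assms center_closed[OF t]
  by (simp add: associator_eq_iff inner_L_apply ldiv_eq_iff central_assoc_right[symmetric])

end

locale automorphic_loop = loop_structure +
  assumes automorphic: "automorphic G m e"
begin

lemma inn_mult: "f \<in> inn G m e \<Longrightarrow> x \<in> G \<Longrightarrow> y \<in> G \<Longrightarrow> f (m x y) = m (f x) (f y)"
  using automorphic unfolding automorphic_def by blast

lemma center_mult_closed:
  assumes t: "t \<in> center G m e" and s: "s \<in> center G m e"
  shows "m t s \<in> center G m e"
  using center_closed[OF t] center_closed[OF s]
  by (simp add: center_def inn_mult inn_fixes_center[OF _ t] inn_fixes_center[OF _ s])

lemma multiplicative_if_detected_by_inn:
  assumes f: "f \<in> inn G m e" and x: "x \<in> G" and y: "y \<in> G"
    and detect: "\<And>z t. z \<in> G \<Longrightarrow> t \<in> center G m e \<Longrightarrow> A z = t \<longleftrightarrow> f z = m z t"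
    and Ax: "A x \<in> center G m e" and Ay: "A y \<in> center G m e"
  shows "A (m x y) = m (A x) (A y)"
proof -
  have "f x = m x (A x)" and "f y = m y (A y)"
    using detect x y Ax Ay by blast+
  then have "f (m x y) = m (m x y) (m (A x) (A y))"
    using inn_mult[OF f x y] central_mult_mult[OF Ax Ay x y] by simp
  then show ?thesis
    using detect[of "m x y"] center_mult_closed[OF Ax Ay] x y by simp
qed

end

theorem lemma2p4:
  fixes G :: "'a set" and m :: "'a \<Rightarrow> 'a \<Rightarrow> 'a" and e :: 'a and a b c d :: 'a
  assumes "loop G m e" and "automorphic G m e" and "nilpotency_class G m e 3"
    and "a \<in> G" and "b \<in> G" and "c \<in> G" and "d \<in> G"
  shows "(associator G m a c d \<in> center G m e \<and> associator G m b c d \<in> center G m e \<longrightarrow>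
           associator G m (m a b) c d = m (associator G m a c d) (associator G m b c d))
       \<and> (associator G m a b d \<in> center G m e \<and> associator G m a c d \<in> center G m e \<longrightarrow>
           associator G m a (m b c) d = m (associator G m a b d) (associator G m a c d))
       \<and> (associator G m a b c \<in> center G m e \<and> associator G m a b d \<in> center G m e \<longrightarrow>
           associator G m a b (m c d) = m (associator G m a b c) (associator G m a b d))"
proof -
  interpret automorphic_loop G m e
    using assms(1,2) by unfold_locales
  note in_G = assms(4-7)
  show ?thesis
    using multiplicative_if_detected_by_inn[OF inner_R_inn, of c d a b "\<lambda>x. associator G m x c d"]
      multiplicative_if_detected_by_inn[OF inner_M_inn, of a d b c "\<lambda>x. associator G m a x d"]
      multiplicative_if_detected_by_inn[OF inner_L_inn, of a b c d "\<lambda>x. associator G m a b x"]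
      associator_central_iff_inner_R associator_central_iff_inner_M associator_central_iff_inner_L
      in_G by simp
qed

end
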